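(* Let $(\mathbb{C},\mathcal{N})$ be a star-regular category satisfying property $( * )$. Let $F^*\rightrightarrows A$ and $G^*\rightrightarrows A$ be kernel stars with $F^*\subseteq G^*$, with coequalisers $f\colon A\to A/F^*$ and $g\colon A\to A/G^*$. Then $f(G^* )\rightrightarrows A/F^*$ is a kernel star, the unique morphism $q\colon A/F^*\to A/G^*$ with $qf=g$ is a coequaliser of $f(G^* )$, and hence $$A/G^*\;\cong\;\frac{A/F^*}{f(G^* )}.$$
   Context: Throughout, $\mathbb{C}$ is a finitely complete regular category with an ideal of morphisms $\mathcal{N}$ (a class such that $gf\in\mathcal{N}$ whenever $f\in\mathcal{N}$ or $g\in\mathcal{N}$). A star on $X$ is a pair of parallel morphisms $\tau=(\tau_1,\tau_2)\colon T\rightrightarrows X$ with $\tau_1\in\mathcal{N}$; monic if jointly monic. For stars $\sigma\colon S\rightrightarrows X$, $\tau\colon T\rightrightarrows X$, write $S\subseteq T$ if there is $h\colon S\to T$ with $\tau_ih=\sigma_i$. An $\mathcal{N}$-kernel of $f$ is a morphism $k$ into its domain with $fk\in\mathcal{N}$, universal with this property. For a relation $\rho=(\rho_1,\rho_2)$, $\rho^*=(\rho_1k,\rho_2k)$ with $k$ the $\mathcal{N}$-kernel of $\rho_1$. The kernel star of $f\colon X\to Y$ (capital letter $F^*$) is $Eq(f)^*$ for $Eq(f)$ the kernel pair of $f$; a kernel star on $X$ is the kernel star of some morphism with domain $X$. Every star factors uniquely up to isomorphism as a regular epimorphism followed by a monic star; for $f\colon X\to Y$ and a star $\lambda$ on $X$,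 $f(\lambda)$ is the monic star part of the factorisation of $(f\lambda_1,f\lambda_2)$. A star-regular category is a regular multi-pointed category with $\mathcal{N}$-kernels in which every regular epimorphism is a coequaliser of some star; there every kernel star $F^*$ on $A$ has a coequaliser $A\to A/F^*$, and $X/S$ denotes the codomain of the coequaliser of a star $S$ on $X$. Property $( * )$: for every kernel star $F^*\rightrightarrows A$ with coequaliser $f$ and every kernel star $G^*\rightrightarrows A$ with $F^*\subseteq G^*$, the star $f(G^* )\rightrightarrows A/F^*$ is a kernel star. *)

theory Defs
  imports Main
begin

text \<open>Categories are encoded concretely: objects of type 'o, arrows of type 'a,
  with a carrier of arrows. Comp C g f denotes g composed after f.\<close>

record ('o, 'a) cat =
  Obj  :: "'o set"
  Arr  :: "'a set"
  Dom  :: "'a \<Rightarrow> 'o"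
  Cod  :: "'a \<Rightarrow> 'o"
  Id   :: "'o \<Rightarrow> 'a"
  Comp :: "'a \<Rightarrow> 'a \<Rightarrow> 'a"

definition category :: "('o, 'a) cat \<Rightarrow> bool" where
  "category C \<longleftrightarrow>
     (\<forall>f\<in>Arr C. Dom C f \<in> Obj C \<and> Cod C f \<in> Obj C) \<and>
     (\<forall>X\<in>Obj C. Id C X \<in> Arr C \<and> Dom C (Id C X) = X \<and> Cod C (Id C X) = X) \<and>
     (\<forall>f g. f \<in> Arr C \<and> g \<in> Arr C \<and> Cod C f = Dom C g \<longrightarrow>
        Comp C g f \<in> Arr C \<and> Dom C (Comp C g f) = Dom C f \<and> Cod C (Comp C g f) = Cod C g) \<and>
     (\<forall>f\<in>Arr C. Comp C f (Id C (Dom C f)) = f \<and> Comp C (Id C (Cod C f)) f = f) \<and>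
     (\<forall>f g h. f \<in> Arr C \<and> g \<in> Arr C \<and> h \<in> Arr C \<and> Cod C f = Dom C g \<and> Cod C g = Dom C h \<longrightarrow>
        Comp C h (Comp C g f) = Comp C (Comp C h g) f)"

definition hom :: "('o, 'a) cat \<Rightarrow> 'a \<Rightarrow> 'o \<Rightarrow> 'o \<Rightarrow> bool" where
  "hom C f X Y \<longleftrightarrow> f \<in> Arr C \<and> Dom C f = X \<and> Cod C f = Y"

definition iso_arr :: "('o, 'a) cat \<Rightarrow> 'a \<Rightarrow> bool" where
  "iso_arr C f \<longleftrightarrow> f \<in> Arr C \<and> (\<exists>g. hom C g (Cod C f) (Dom C f) \<and>
      Comp C g f = Id C (Dom C f) \<and> Comp C f g = Id C (Cod C f))"

definition iso_obj :: "('o, 'a) cat \<Rightarrow> 'o \<Rightarrow> 'o \<Rightarrow> bool" where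
  "iso_obj C X Y \<longleftrightarrow> (\<exists>f. hom C f X Y \<and> iso_arr C f)"

definition jointly_monic :: "('o, 'a) cat \<Rightarrow> 'a \<Rightarrow> 'a \<Rightarrow> bool" where
  "jointly_monic C s1 s2 \<longleftrightarrow> s1 \<in> Arr C \<and> s2 \<in> Arr C \<and> Dom C s1 = Dom C s2 \<and>
     (\<forall>a b. a \<in> Arr C \<and> b \<in> Arr C \<and> Dom C a = Dom C b \<and> Cod C a = Dom C s1 \<and> Cod C b = Dom C s1 \<and>
        Comp C s1 a = Comp C s1 b \<and> Comp C s2 a = Comp C s2 b \<longrightarrow> a = b)"

definition is_coequaliser :: "('o, 'a) cat \<Rightarrow> 'a \<Rightarrow> 'a \<Rightarrow> 'a \<Rightarrow> bool" where
  "is_coequaliser C s1 s2 c \<longleftrightarrow>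
     s1 \<in> Arr C \<and> s2 \<in> Arr C \<and> c \<in> Arr C \<and> Dom C s1 = Dom C s2 \<and>
     Cod C s1 = Dom C c \<and> Cod C s2 = Dom C c \<and> Comp C c s1 = Comp C c s2 \<and>
     (\<forall>h. h \<in> Arr C \<and> Dom C h = Dom C c \<and> Comp C h s1 = Comp C h s2 \<longrightarrow>
        (\<exists>!u. hom C u (Cod C c) (Cod C h) \<and> Comp C u c = h))"

definition regular_epi :: "('o, 'a) cat \<Rightarrow> 'a \<Rightarrow> bool" where
  "regular_epi C e \<longleftrightarrow> (\<exists>s1 s2. is_coequaliser C s1 s2 e)"

definition is_pullback :: "('o, 'a) cat \<Rightarrow> 'a \<Rightarrow> 'a \<Rightarrow> 'a \<Rightarrow> 'a \<Rightarrow> bool" where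
  "is_pullback C f g p1 p2 \<longleftrightarrow>
     f \<in> Arr C \<and> g \<in> Arr C \<and> p1 \<in> Arr C \<and> p2 \<in> Arr C \<and> Cod C f = Cod C g \<and>
     Dom C p1 = Dom C p2 \<and> Cod C p1 = Dom C f \<and> Cod C p2 = Dom C g \<and>
     Comp C f p1 = Comp C g p2 \<and>
     (\<forall>a b. a \<in> Arr C \<and> b \<in> Arr C \<and> Dom C a = Dom C b \<and> Cod C a = Dom C f \<and> Cod C b = Dom C g \<and>
        Comp C f a = Comp C g b \<longrightarrow>
        (\<exists>!u. hom C u (Dom C a) (Dom C p1) \<and> Comp C p1 u = a \<and> Comp C p2 u = b))"

definition kernel_pair :: "('o, 'a) cat \<Rightarrow> 'a \<Rightarrow> 'a \<Rightarrow> 'a \<Rightarrow> bool" where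
  "kernel_pair C f p1 p2 \<longleftrightarrow> is_pullback C f f p1 p2"

definition terminal :: "('o, 'a) cat \<Rightarrow> 'o \<Rightarrow> bool" where
  "terminal C T \<longleftrightarrow> T \<in> Obj C \<and> (\<forall>X\<in>Obj C. \<exists>!u. hom C u X T)"

definition finitely_complete :: "('o, 'a) cat \<Rightarrow> bool" where
  "finitely_complete C \<longleftrightarrow> category C \<and> (\<exists>T. terminal C T) \<and>
     (\<forall>f g. f \<in> Arr C \<and> g \<in> Arr C \<and> Cod C f = Cod C g \<longrightarrow> (\<exists>p1 p2. is_pullback C f g p1 p2))"

definition regular_category :: "('o, 'a) cat \<Rightarrow> bool" where
  "regular_category C \<longleftrightarrow> finitely_complete C \<and>
     (\<forall>f p1 p2. kernel_pair C f p1 p2 \<longrightarrow> (\<exists>c. is_coequaliser C p1 p2 c)) \<and>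
     (\<forall>e g p1 p2. regular_epi C e \<and> is_pullback C e g p1 p2 \<longrightarrow> regular_epi C p2)"

definition ideal :: "('o, 'a) cat \<Rightarrow> 'a set \<Rightarrow> bool" where
  "ideal C N \<longleftrightarrow> N \<subseteq> Arr C \<and>
     (\<forall>f g. f \<in> Arr C \<and> g \<in> Arr C \<and> Cod C f = Dom C g \<and> (f \<in> N \<or> g \<in> N) \<longrightarrow> Comp C g f \<in> N)"

definition is_N_kernel :: "('o, 'a) cat \<Rightarrow> 'a set \<Rightarrow> 'a \<Rightarrow> 'a \<Rightarrow> bool" where
  "is_N_kernel C N f k \<longleftrightarrow> f \<in> Arr C \<and> k \<in> Arr C \<and> Cod C k = Dom C f \<and> Comp C f k \<in> N \<and>
     (\<forall>m. m \<in> Arr C \<and> Cod C m = Dom C f \<and> Comp C f m \<in> N \<longrightarrow>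
        (\<exists>!h. hom C h (Dom C m) (Dom C k) \<and> Comp C k h = m))"

definition has_N_kernels :: "('o, 'a) cat \<Rightarrow> 'a set \<Rightarrow> bool" where
  "has_N_kernels C N \<longleftrightarrow> (\<forall>f\<in>Arr C. \<exists>k. is_N_kernel C N f k)"

definition is_star :: "('o, 'a) cat \<Rightarrow> 'a set \<Rightarrow> 'o \<Rightarrow> 'a \<Rightarrow> 'a \<Rightarrow> bool" where
  "is_star C N X t1 t2 \<longleftrightarrow> t1 \<in> Arr C \<and> t2 \<in> Arr C \<and> Dom C t1 = Dom C t2 \<and>
     Cod C t1 = X \<and> Cod C t2 = X \<and> t1 \<in> N"

definition star_le :: "('o, 'a) cat \<Rightarrow> 'a \<times> 'a \<Rightarrow> 'a \<times> 'a \<Rightarrow> bool" where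
  "star_le C S T \<longleftrightarrow> (\<exists>h. hom C h (Dom C (fst S)) (Dom C (fst T)) \<and>
     Comp C (fst T) h = fst S \<and> Comp C (snd T) h = snd S)"

text \<open>(s1,s2) is (a representative of) the kernel star F* of f.\<close>
definition kernel_star_of :: "('o, 'a) cat \<Rightarrow> 'a set \<Rightarrow> 'a \<Rightarrow> 'a \<times> 'a \<Rightarrow> bool" where
  "kernel_star_of C N f S \<longleftrightarrow> (\<exists>p1 p2 k. kernel_pair C f p1 p2 \<and> is_N_kernel C N p1 k \<and>
     fst S = Comp C p1 k \<and> snd S = Comp C p2 k)"

definition kernel_star_on :: "('o, 'a) cat \<Rightarrow> 'a set \<Rightarrow> 'o \<Rightarrow> 'a \<times> 'a \<Rightarrow> bool" where
  "kernel_star_on C N X S \<longleftrightarrow> (\<exists>f. f \<in> Arr C \<and> Dom C f = X \<and> kernel_star_of C N f S)"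

definition image_star :: "('o, 'a) cat \<Rightarrow> 'a \<Rightarrow> 'a \<times> 'a \<Rightarrow> 'a \<times> 'a \<Rightarrow> bool" where
  "image_star C f L M \<longleftrightarrow> (\<exists>e. regular_epi C e \<and> Dom C e = Dom C (fst L) \<and>
     hom C (fst M) (Cod C e) (Cod C f) \<and> hom C (snd M) (Cod C e) (Cod C f) \<and>
     jointly_monic C (fst M) (snd M) \<and>
     Comp C (fst M) e = Comp C f (fst L) \<and> Comp C (snd M) e = Comp C f (snd L))"

definition star_regular :: "('o, 'a) cat \<Rightarrow> 'a set \<Rightarrow> bool" where
  "star_regular C N \<longleftrightarrow> regular_category C \<and> ideal C N \<and> has_N_kernels C N \<and>
     (\<forall>e. regular_epi C e \<longrightarrow> (\<exists>s1 s2. is_star C N (Dom C e) s1 s2 \<and> is_coequaliser C s1 s2 e))"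

definition property_star :: "('o, 'a) cat \<Rightarrow> 'a set \<Rightarrow> bool" where
  "property_star C N \<longleftrightarrow> (\<forall>A F G f. kernel_star_on C N A F \<and> kernel_star_on C N A G \<and>
     star_le C F G \<and> is_coequaliser C (fst F) (snd F) f \<longrightarrow>
     (\<forall>M. image_star C f G M \<longrightarrow> kernel_star_on C N (Cod C f) M))"

end

theory Submission
  imports Defs
begin

text \<open>Since F* \<subseteq> G*, the coequaliser g of G* also coequalises F*, so g = q f for a unique q.
  Write f(G*) = (m1, m2) with m1 e = f G1 and m2 e = f G2 for a regular epimorphism e. If k m1 = k m2,
  then k f coequalises G* and so factors through g; since f is epi the factorisation passes to q,
  and since e is epi q itself coequalises (m1, m2). Hence q is a coequaliser of f(G*), which is a
  kernel star by property_star, and A/G* is isomorphic to (A/F*)/f(G*) because coequalisers are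
  unique up to isomorphism. The image f(G*) exists by the regular epi-mono factorisation of the
  pairing of f G1 and f G2 into a product.\<close>

definition epi_arr :: "('o, 'a) cat \<Rightarrow> 'a \<Rightarrow> bool" where
  "epi_arr C e \<longleftrightarrow> e \<in> Arr C \<and>
     (\<forall>x y. x \<in> Arr C \<and> y \<in> Arr C \<and> Dom C x = Cod C e \<and> Dom C y = Cod C e \<and> Cod C x = Cod C y \<and>
        Comp C x e = Comp C y e \<longrightarrow> x = y)"

definition mono_arr :: "('o, 'a) cat \<Rightarrow> 'a \<Rightarrow> bool" where
  "mono_arr C m \<longleftrightarrow> m \<in> Arr C \<and>
     (\<forall>x y. x \<in> Arr C \<and> y \<in> Arr C \<and> Dom C x = Dom C y \<and> Cod C x = Dom C m \<and> Cod C y = Dom C m \<and>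
        Comp C m x = Comp C m y \<longrightarrow> x = y)"

lemma epi_arrI:
  assumes "e \<in> Arr C"
    and "\<And>x y. x \<in> Arr C \<Longrightarrow> y \<in> Arr C \<Longrightarrow> Dom C x = Cod C e \<Longrightarrow> Dom C y = Cod C e \<Longrightarrow>
           Cod C x = Cod C y \<Longrightarrow> Comp C x e = Comp C y e \<Longrightarrow> x = y"
  shows "epi_arr C e"
  using assms unfolding epi_arr_def by blast

lemma epi_arrD:
  "epi_arr C e \<Longrightarrow> x \<in> Arr C \<Longrightarrow> y \<in> Arr C \<Longrightarrow> Dom C x = Cod C e \<Longrightarrow> Dom C y = Cod C e \<Longrightarrow>
   Cod C x = Cod C y \<Longrightarrow> Comp C x e = Comp C y e \<Longrightarrow> x = y"
  unfolding epi_arr_def by blast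

lemma mono_arrI:
  assumes "m \<in> Arr C"
    and "\<And>x y. x \<in> Arr C \<Longrightarrow> y \<in> Arr C \<Longrightarrow> Dom C x = Dom C y \<Longrightarrow> Cod C x = Dom C m \<Longrightarrow>
           Cod C y = Dom C m \<Longrightarrow> Comp C m x = Comp C m y \<Longrightarrow> x = y"
  shows "mono_arr C m"
  using assms unfolding mono_arr_def by blast

lemma mono_arrD:
  "mono_arr C m \<Longrightarrow> x \<in> Arr C \<Longrightarrow> y \<in> Arr C \<Longrightarrow> Dom C x = Dom C y \<Longrightarrow> Cod C x = Dom C m \<Longrightarrow>
   Cod C y = Dom C m \<Longrightarrow> Comp C m x = Comp C m y \<Longrightarrow> x = y"
  unfolding mono_arr_def by blast

lemma jointly_monicI:
  assumes "s1 \<in> Arr C" "s2 \<in> Arr C" "Dom C s1 = Dom C s2"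
    and "\<And>x y. x \<in> Arr C \<Longrightarrow> y \<in> Arr C \<Longrightarrow> Dom C x = Dom C y \<Longrightarrow> Cod C x = Dom C s1 \<Longrightarrow>
           Cod C y = Dom C s1 \<Longrightarrow> Comp C s1 x = Comp C s1 y \<Longrightarrow> Comp C s2 x = Comp C s2 y \<Longrightarrow> x = y"
  shows "jointly_monic C s1 s2"
  using assms unfolding jointly_monic_def by blast

lemma jointly_monicD:
  "jointly_monic C s1 s2 \<Longrightarrow> x \<in> Arr C \<Longrightarrow> y \<in> Arr C \<Longrightarrow> Dom C x = Dom C y \<Longrightarrow>
   Cod C x = Dom C s1 \<Longrightarrow> Cod C y = Dom C s1 \<Longrightarrow> Comp C s1 x = Comp C s1 y \<Longrightarrow>
   Comp C s2 x = Comp C s2 y \<Longrightarrow> x = y"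
  unfolding jointly_monic_def by blast

lemma epi_arr_arr: "epi_arr C e \<Longrightarrow> e \<in> Arr C"
  unfolding epi_arr_def by blast

lemma mono_arr_arr: "mono_arr C m \<Longrightarrow> m \<in> Arr C"
  unfolding mono_arr_def by blast

lemma jointly_monic_arr:
  assumes "jointly_monic C s1 s2"
  shows "s1 \<in> Arr C" "s2 \<in> Arr C" "Dom C s1 = Dom C s2"
  using assms unfolding jointly_monic_def by blast+

lemma is_coequaliserD:
  assumes "is_coequaliser C s1 s2 c"
  shows "s1 \<in> Arr C" "s2 \<in> Arr C" "c \<in> Arr C" "Dom C s1 = Dom C s2"
    "Cod C s1 = Dom C c" "Cod C s2 = Dom C c" "Comp C c s1 = Comp C c s2"
  using assms unfolding is_coequaliser_def by blast+

lemma is_pullbackD: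
  assumes "is_pullback C f g p1 p2"
  shows "f \<in> Arr C" "g \<in> Arr C" "p1 \<in> Arr C" "p2 \<in> Arr C" "Cod C f = Cod C g"
    "Dom C p1 = Dom C p2" "Cod C p1 = Dom C f" "Cod C p2 = Dom C g" "Comp C f p1 = Comp C g p2"
  using assms unfolding is_pullback_def by blast+

locale cat =
  fixes C :: "('o, 'a) cat"
  assumes category: "category C"
begin

lemma comp_arr [simp]: "f \<in> Arr C \<Longrightarrow> g \<in> Arr C \<Longrightarrow> Cod C f = Dom C g \<Longrightarrow> Comp C g f \<in> Arr C"
  and dom_comp [simp]: "f \<in> Arr C \<Longrightarrow> g \<in> Arr C \<Longrightarrow> Cod C f = Dom C g \<Longrightarrow> Dom C (Comp C g f) = Dom C f"
  and cod_comp [simp]: "f \<in> Arr C \<Longrightarrow> g \<in> Arr C \<Longrightarrow> Cod C f = Dom C g \<Longrightarrow> Cod C (Comp C g f) = Cod C g"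
  using category unfolding category_def by blast+

lemma comp_assoc:
  "f \<in> Arr C \<Longrightarrow> g \<in> Arr C \<Longrightarrow> h \<in> Arr C \<Longrightarrow> Cod C f = Dom C g \<Longrightarrow> Cod C g = Dom C h \<Longrightarrow>
   Comp C (Comp C h g) f = Comp C h (Comp C g f)"
  using category unfolding category_def by metis

lemma id_arr [simp]: "X \<in> Obj C \<Longrightarrow> Id C X \<in> Arr C"
  and dom_id [simp]: "X \<in> Obj C \<Longrightarrow> Dom C (Id C X) = X"
  and cod_id [simp]: "X \<in> Obj C \<Longrightarrow> Cod C (Id C X) = X"
  using category unfolding category_def by blast+

lemma comp_id_left [simp]: "f \<in> Arr C \<Longrightarrow> Comp C (Id C (Cod C f)) f = f"
  using category unfolding category_def by blast

lemma dom_obj [simp]: "f \<in> Arr C \<Longrightarrow> Dom C f \<in> Obj C"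
  and cod_obj [simp]: "f \<in> Arr C \<Longrightarrow> Cod C f \<in> Obj C"
  using category unfolding category_def by blast+

lemma epi_comp:
  assumes e: "epi_arr C e" and d: "epi_arr C d" and ed: "Cod C e = Dom C d"
  shows "epi_arr C (Comp C d e)"
proof -
  have ar: "e \<in> Arr C" "d \<in> Arr C" using e d by (simp_all add: epi_arr_arr)
  show ?thesis
  proof (rule epi_arrI)
    fix x y assume x: "x \<in> Arr C" "Dom C x = Cod C (Comp C d e)"
      and y: "y \<in> Arr C" "Dom C y = Cod C (Comp C d e)"
      and "Cod C x = Cod C y" and xy: "Comp C x (Comp C d e) = Comp C y (Comp C d e)"
    have "Comp C (Comp C x d) e = Comp C (Comp C y d) e"
      using ar ed x y xy by (simp add: comp_assoc)
    then have "Comp C x d = Comp C y d"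
      using epi_arrD[OF e] ar ed x y \<open>Cod C x = Cod C y\<close> by simp
    then show "x = y"
      using epi_arrD[OF d] ar ed x y \<open>Cod C x = Cod C y\<close> by simp
  qed (use ar ed in simp)
qed

lemma epi_of_epi_comp:
  assumes de: "epi_arr C (Comp C d e)" and ar: "e \<in> Arr C" "d \<in> Arr C" "Cod C e = Dom C d"
  shows "epi_arr C d"
proof (rule epi_arrI)
  fix x y assume x: "x \<in> Arr C" "Dom C x = Cod C d" and y: "y \<in> Arr C" "Dom C y = Cod C d"
    and "Cod C x = Cod C y" and xy: "Comp C x d = Comp C y d"
  have "Comp C x (Comp C d e) = Comp C y (Comp C d e)"
    using ar x y xy by (simp flip: comp_assoc)
  then show "x = y"
    using epi_arrD[OF de] ar x y \<open>Cod C x = Cod C y\<close> by simp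
qed (use ar in simp)

lemma coequaliser_factor:
  assumes "is_coequaliser C s1 s2 c" "h \<in> Arr C" "Dom C h = Dom C c" "Comp C h s1 = Comp C h s2"
  obtains u where "hom C u (Cod C c) (Cod C h)" "Comp C u c = h"
  using assms unfolding is_coequaliser_def by blast

lemma coequaliser_epi:
  assumes c: "is_coequaliser C s1 s2 c"
  shows "epi_arr C c"
proof -
  note cc = is_coequaliserD[OF c]
  show ?thesis
  proof (rule epi_arrI)
    fix x y assume x: "x \<in> Arr C" "Dom C x = Cod C c" and y: "y \<in> Arr C" "Dom C y = Cod C c"
      and "Cod C x = Cod C y" and xy: "Comp C x c = Comp C y c"
    let ?h = "Comp C x c"
    have "Comp C ?h s1 = Comp C ?h s2"
      using cc x by (simp add: comp_assoc)
    moreover have "?h \<in> Arr C" "Dom C ?h = Dom C c"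
      using cc x by simp_all
    ultimately have unique: "\<exists>!u. hom C u (Cod C c) (Cod C ?h) \<and> Comp C u c = ?h"
      using c unfolding is_coequaliser_def by blast
    have "hom C x (Cod C c) (Cod C ?h)" "hom C y (Cod C c) (Cod C ?h)"
      using cc x y \<open>Cod C x = Cod C y\<close> unfolding hom_def by simp_all
    then show "x = y"
      using unique xy by (auto elim!: ex1E)
  qed (use cc in simp)
qed

lemma regular_epi_epi: "regular_epi C e \<Longrightarrow> epi_arr C e"
  unfolding regular_epi_def using coequaliser_epi by blast

lemma coequaliser_iso:
  assumes q: "is_coequaliser C s1 s2 q" and c: "is_coequaliser C s1 s2 c"
  shows "iso_obj C (Cod C q) (Cod C c)"
proof -
  note ar = is_coequaliserD[OF q] is_coequaliserD[OF c]
  obtain u v where u: "hom C u (Cod C q) (Cod C c)" "Comp C u q = c"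
    and v: "hom C v (Cod C c) (Cod C q)" "Comp C v c = q"
    using coequaliser_factor[OF q] coequaliser_factor[OF c] ar by metis
  then have uv: "u \<in> Arr C" "v \<in> Arr C" "Dom C u = Cod C q" "Cod C u = Cod C c"
    "Dom C v = Cod C c" "Cod C v = Cod C q"
    unfolding hom_def by auto
  have "Comp C (Comp C v u) q = Comp C (Id C (Cod C q)) q"
    using u v uv ar by (simp add: comp_assoc)
  then have vu: "Comp C v u = Id C (Cod C q)"
    using epi_arrD[OF coequaliser_epi[OF q]] uv ar by simp
  have "Comp C (Comp C u v) c = Comp C (Id C (Cod C c)) c"
    using u v uv ar by (simp add: comp_assoc)
  then have "Comp C u v = Id C (Cod C c)"
    using epi_arrD[OF coequaliser_epi[OF c]] uv ar by simp
  with vu u(1) v(1) show ?thesis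
    unfolding iso_obj_def iso_arr_def hom_def by (intro exI[of _ u] conjI exI[of _ v]) auto
qed

lemma pullback_jointly_monic:
  assumes P: "is_pullback C f g p1 p2"
  shows "jointly_monic C p1 p2"
proof -
  note pp = is_pullbackD[OF P]
  show ?thesis
  proof (rule jointly_monicI)
    fix x y assume x: "x \<in> Arr C" "Cod C x = Dom C p1" and y: "y \<in> Arr C" "Cod C y = Dom C p1"
      and "Dom C x = Dom C y" and xy: "Comp C p1 x = Comp C p1 y" "Comp C p2 x = Comp C p2 y"
    let ?a = "Comp C p1 x" and ?b = "Comp C p2 x"
    have "Comp C f ?a = Comp C (Comp C g p2) x"
      using pp x by (simp flip: comp_assoc)
    then have "Comp C f ?a = Comp C g ?b"
      using pp x by (simp add: comp_assoc)
    moreover have "?a \<in> Arr C" "?b \<in> Arr C" "Dom C ?a = Dom C ?b" "Cod C ?a = Dom C f" "Cod C ?b = Dom C g"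
      using pp x by auto
    ultimately have unique: "\<exists>!u. hom C u (Dom C ?a) (Dom C p1) \<and> Comp C p1 u = ?a \<and> Comp C p2 u = ?b"
      using P unfolding is_pullback_def by blast
    have "hom C x (Dom C ?a) (Dom C p1)" "hom C y (Dom C ?a) (Dom C p1)"
      using pp x y \<open>Dom C x = Dom C y\<close> unfolding hom_def by simp_all
    then show "x = y"
      using unique xy by (auto elim!: ex1E)
  qed (use pp in simp_all)
qed

lemma jointly_monic_comp_mono:
  assumes p: "jointly_monic C p1 p2" and m: "mono_arr C m" and mp: "Cod C m = Dom C p1"
  shows "jointly_monic C (Comp C p1 m) (Comp C p2 m)"
proof -
  have ar: "p1 \<in> Arr C" "p2 \<in> Arr C" "m \<in> Arr C" "Dom C p1 = Dom C p2"
    using jointly_monic_arr[OF p] mono_arr_arr[OF m] by simp_all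
  show ?thesis
  proof (rule jointly_monicI)
    fix x y assume x: "x \<in> Arr C" "Cod C x = Dom C (Comp C p1 m)"
      and y: "y \<in> Arr C" "Cod C y = Dom C (Comp C p1 m)" and "Dom C x = Dom C y"
      and xy: "Comp C (Comp C p1 m) x = Comp C (Comp C p1 m) y"
        "Comp C (Comp C p2 m) x = Comp C (Comp C p2 m) y"
    have "Comp C p1 (Comp C m x) = Comp C p1 (Comp C m y)"
      "Comp C p2 (Comp C m x) = Comp C p2 (Comp C m y)"
      using xy x y ar mp by (simp_all add: comp_assoc)
    then have "Comp C m x = Comp C m y"
      using jointly_monicD[OF p] ar mp x y \<open>Dom C x = Dom C y\<close> by simp
    then show "x = y"
      using mono_arrD[OF m] ar mp x y \<open>Dom C x = Dom C y\<close> by simp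
  qed (use ar mp in simp_all)
qed

lemma terminal_arrow_unique:
  assumes T: "terminal C T" and u: "hom C u X T" and v: "hom C v X T"
  shows "u = v"
proof -
  have "X \<in> Obj C"
    using u dom_obj unfolding hom_def by blast
  then have "\<exists>!u. hom C u X T"
    using T unfolding terminal_def by blast
  then show ?thesis
    using u v by (auto elim!: ex1E)
qed

lemma pullback_lift:
  assumes "is_pullback C f g p1 p2" "a \<in> Arr C" "b \<in> Arr C" "Dom C a = Dom C b"
    "Cod C a = Dom C f" "Cod C b = Dom C g" "Comp C f a = Comp C g b"
  obtains u where "hom C u (Dom C a) (Dom C p1)" "Comp C p1 u = a" "Comp C p2 u = b"
  using assms unfolding is_pullback_def by blast

lemma kernel_pair_diagonal_mono:
  assumes "kernel_pair C m r r"
  shows "mono_arr C m"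
proof (rule mono_arrI)
  fix x y assume "x \<in> Arr C" "y \<in> Arr C" "Dom C x = Dom C y" "Cod C x = Dom C m" "Cod C y = Dom C m"
    "Comp C m x = Comp C m y"
  then obtain u where "Comp C r u = x" "Comp C r u = y"
    using assms unfolding kernel_pair_def is_pullback_def by blast
  then show "x = y" by simp
qed (use assms in \<open>simp add: kernel_pair_def is_pullback_def\<close>)

lemma kernel_pair_coequaliser_identifies:
  assumes kp: "kernel_pair C w p1 p2" and e: "is_coequaliser C p1 p2 e"
    and a: "a1 \<in> Arr C" "a2 \<in> Arr C" "Dom C a1 = Dom C a2" "Cod C a1 = Dom C w" "Cod C a2 = Dom C w"
    and wa: "Comp C w a1 = Comp C w a2"
  shows "Comp C e a1 = Comp C e a2"
proof -
  note ee = is_coequaliserD[OF e]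
  obtain v where v: "hom C v (Dom C a1) (Dom C p1)" "Comp C p1 v = a1" "Comp C p2 v = a2"
    using pullback_lift[OF kp[unfolded kernel_pair_def] a wa] .
  have v_arr: "v \<in> Arr C" "Cod C v = Dom C p1"
    using v(1) unfolding hom_def by simp_all
  have "Comp C e a1 = Comp C (Comp C e p1) v"
    using v(2) v_arr ee(1,3,5) by (simp add: comp_assoc)
  also have "\<dots> = Comp C (Comp C e p2) v"
    using ee(7) by simp
  also have "\<dots> = Comp C e a2"
    using v(3) v_arr ee(2,3,4,6) by (simp add: comp_assoc)
  finally show ?thesis .
qed

lemma coequaliser_coequalises_smaller_star:
  assumes le: "star_le C F G" and g: "is_coequaliser C (fst G) (snd G) g"
  shows "Cod C (fst F) = Dom C g" "Comp C g (fst F) = Comp C g (snd F)"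
proof -
  obtain h where h: "hom C h (Dom C (fst F)) (Dom C (fst G))" "Comp C (fst G) h = fst F"
    "Comp C (snd G) h = snd F"
    using le unfolding star_le_def by blast
  note gg = is_coequaliserD[OF g]
  have hh: "h \<in> Arr C" "Cod C h = Dom C (fst G)"
    using h(1) unfolding hom_def by simp_all
  show "Cod C (fst F) = Dom C g"
    using h(2)[symmetric] hh gg(1,5) by simp
  have "Comp C g (fst F) = Comp C (Comp C g (fst G)) h"
    using h(2) hh gg(1,3,5) by (simp add: comp_assoc)
  also have "\<dots> = Comp C (Comp C g (snd G)) h"
    using gg(7) by simp
  also have "\<dots> = Comp C g (snd F)"
    using h(3) hh gg(2,3,4,6) by (simp add: comp_assoc)
  finally show "Comp C g (fst F) = Comp C g (snd F)" .
qed

lemma epi_coequaliserI: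
  assumes q: "epi_arr C q" and s: "s1 \<in> Arr C" "s2 \<in> Arr C" "Dom C s1 = Dom C s2"
    "Cod C s1 = Dom C q" "Cod C s2 = Dom C q" "Comp C q s1 = Comp C q s2"
    and factor: "\<And>k. k \<in> Arr C \<Longrightarrow> Dom C k = Dom C q \<Longrightarrow> Comp C k s1 = Comp C k s2 \<Longrightarrow>
      \<exists>u. hom C u (Cod C q) (Cod C k) \<and> Comp C u q = k"
  shows "is_coequaliser C s1 s2 q"
  unfolding is_coequaliser_def
proof (intro conjI allI impI)
  fix k assume k: "k \<in> Arr C \<and> Dom C k = Dom C q \<and> Comp C k s1 = Comp C k s2"
  then obtain u where u: "hom C u (Cod C q) (Cod C k)" "Comp C u q = k"
    using factor by blast
  show "\<exists>!u. hom C u (Cod C q) (Cod C k) \<and> Comp C u q = k"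
  proof (rule ex1I[of _ u])
    fix u' assume "hom C u' (Cod C q) (Cod C k) \<and> Comp C u' q = k"
    then show "u' = u"
      using epi_arrD[OF q] u unfolding hom_def by simp
  qed (use u in blast)
qed (use epi_arr_arr[OF q] s in simp_all)

lemma coequaliser_through_epi:
  assumes f: "epi_arr C f" and g: "is_coequaliser C s1 s2 g"
    and q: "hom C q (Cod C f) (Cod C g)" "Comp C q f = g"
    and e: "epi_arr C e"
    and m: "hom C m1 (Cod C e) (Cod C f)" "hom C m2 (Cod C e) (Cod C f)"
    and me: "Comp C m1 e = Comp C f s1" "Comp C m2 e = Comp C f s2"
  shows "is_coequaliser C m1 m2 q"
proof -
  have ar: "f \<in> Arr C" "e \<in> Arr C" "q \<in> Arr C" "Dom C q = Cod C f" "Cod C q = Cod C g"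
    "m1 \<in> Arr C" "m2 \<in> Arr C" "Dom C m1 = Cod C e" "Dom C m2 = Cod C e"
    "Cod C m1 = Cod C f" "Cod C m2 = Cod C f"
    using epi_arr_arr[OF f] epi_arr_arr[OF e] q m unfolding hom_def by simp_all
  have gg: "s1 \<in> Arr C" "s2 \<in> Arr C" "Cod C s1 = Dom C f" "Cod C s2 = Dom C f"
    "Comp C g s1 = Comp C g s2" "Dom C g = Dom C f"
    using is_coequaliserD[OF g] dom_comp[of f q] q(2) ar by simp_all
  have m_via_f: "Comp C (Comp C k m1) e = Comp C (Comp C k f) s1"
    "Comp C (Comp C k m2) e = Comp C (Comp C k f) s2"
    if "k \<in> Arr C" "Dom C k = Cod C f" for k
    using that ar gg me by (simp_all add: comp_assoc)
  have "Comp C (Comp C q m1) e = Comp C (Comp C q m2) e"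
    using m_via_f[of q] ar gg q(2) by simp
  then have qm: "Comp C q m1 = Comp C q m2"
    using epi_arrD[OF e] ar by simp
  have q_epi: "epi_arr C q"
    using epi_of_epi_comp[of q f] coequaliser_epi[OF g] q(2) ar by simp
  show ?thesis
  proof (rule epi_coequaliserI[OF q_epi ar(6,7) _ _ _ qm])
    fix k assume k: "k \<in> Arr C" "Dom C k = Dom C q" "Comp C k m1 = Comp C k m2"
    have "Comp C (Comp C k f) s1 = Comp C (Comp C k f) s2"
      using m_via_f[of k] k ar by simp
    then obtain u where u: "hom C u (Cod C g) (Cod C k)" "Comp C u g = Comp C k f"
      using coequaliser_factor[OF g, of "Comp C k f"] k ar gg by auto
    then have "Comp C (Comp C u q) f = Comp C k f"
      using ar q(2) unfolding hom_def by (simp add: comp_assoc)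
    then have "Comp C u q = k"
      using epi_arrD[OF f] u k ar unfolding hom_def by simp
    then show "\<exists>u. hom C u (Cod C q) (Cod C k) \<and> Comp C u q = k"
      using u(1) ar by auto
  qed (use ar in simp_all)
qed

lemma image_star_coequaliser:
  assumes f: "epi_arr C f" and g: "is_coequaliser C (fst L) (snd L) g"
    and q: "hom C q (Cod C f) (Cod C g)" "Comp C q f = g" and M: "image_star C f L M"
  shows "is_coequaliser C (fst M) (snd M) q"
proof -
  obtain e where "regular_epi C e" "hom C (fst M) (Cod C e) (Cod C f)" "hom C (snd M) (Cod C e) (Cod C f)"
    "Comp C (fst M) e = Comp C f (fst L)" "Comp C (snd M) e = Comp C f (snd L)"
    using M unfolding image_star_def by blast
  then show ?thesis
    using coequaliser_through_epi[OF f g q] regular_epi_epi by blast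
qed

end

lemma regular_category_category: "regular_category C \<Longrightarrow> category C"
  unfolding regular_category_def finitely_complete_def by blast

locale regular_cat =
  fixes C :: "('o, 'a) cat"
  assumes regular: "regular_category C"

sublocale regular_cat \<subseteq> cat
  by unfold_locales (rule regular_category_category[OF regular])

context regular_cat
begin

lemma pullback_exists:
  assumes "f \<in> Arr C" "g \<in> Arr C" "Cod C f = Cod C g"
  obtains p1 p2 where "is_pullback C f g p1 p2"
  using assms regular unfolding regular_category_def finitely_complete_def by blast

lemma pullback_regular_epi:
  "regular_epi C e \<Longrightarrow> is_pullback C e g p1 p2 \<Longrightarrow> regular_epi C p2"
  using regular unfolding regular_category_def by blast

lemma kernel_pair_coequaliser_exists:
  "kernel_pair C w p1 p2 \<Longrightarrow> \<exists>e. is_coequaliser C p1 p2 e"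
  using regular unfolding regular_category_def by blast

lemma terminal_exists: "\<exists>T. terminal C T"
  using regular unfolding regular_category_def finitely_complete_def by blast

(* c is a composite of two pulled-back regular epimorphisms, so it is only known to be epi. *)
lemma pair_cover_through_regular_epi:
  assumes e: "regular_epi C e"
    and r: "r1 \<in> Arr C" "r2 \<in> Arr C" "Dom C r1 = Dom C r2" "Cod C r1 = Cod C e" "Cod C r2 = Cod C e"
  obtains c a1 a2 where "epi_arr C c" "Cod C c = Dom C r1"
    "a1 \<in> Arr C" "a2 \<in> Arr C" "Dom C a1 = Dom C c" "Dom C a2 = Dom C c"
    "Cod C a1 = Dom C e" "Cod C a2 = Dom C e"
    "Comp C e a1 = Comp C r1 c" "Comp C e a2 = Comp C r2 c"
proof -
  have ea: "e \<in> Arr C"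
    using epi_arr_arr[OF regular_epi_epi[OF e]] .
  obtain q1 q2 where q: "is_pullback C e r1 q1 q2"
    using pullback_exists[where f=e and g=r1] ea r(1,4) by metis
  note qq = is_pullbackD[OF q]
  have r2q2: "Comp C r2 q2 \<in> Arr C" "Cod C (Comp C r2 q2) = Cod C e"
    using qq r by simp_all
  obtain s1 s2 where s: "is_pullback C e (Comp C r2 q2) s1 s2"
    using pullback_exists[where f=e and g="Comp C r2 q2"] ea r2q2 by metis
  note ss = is_pullbackD[OF s]
  have s2q2: "Cod C s2 = Dom C q2"
    using ss(8) qq(4,8) r(2,3) by simp
  have "epi_arr C (Comp C q2 s2)"
    using s2q2 by (rule epi_comp[OF regular_epi_epi[OF pullback_regular_epi[OF e s]]
          regular_epi_epi[OF pullback_regular_epi[OF e q]]])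
  moreover have "Comp C e (Comp C q1 s2) = Comp C (Comp C e q1) s2"
    using qq(1,3,6,7) ss(4) s2q2 by (simp add: comp_assoc)
  then have "Comp C e (Comp C q1 s2) = Comp C r1 (Comp C q2 s2)"
    using qq(2,4,8,9) ss(4) s2q2 by (simp add: comp_assoc)
  moreover have "Comp C e s1 = Comp C r2 (Comp C q2 s2)"
    using ss(4,9) qq(4,8) r(2,3) s2q2 by (simp add: comp_assoc)
  ultimately show ?thesis
    using that[of "Comp C q2 s2" "Comp C q1 s2" s1] qq(3,4,6,7,8) ss(3,4,6,7) s2q2 by simp
qed

(* The kernel pair of m is covered by a pair that w identifies, hence so does e; so it is the diagonal. *)
lemma kernel_pair_coequaliser_factor_mono:
  assumes kp: "kernel_pair C w p1 p2" and e: "is_coequaliser C p1 p2 e"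
    and m: "hom C m (Cod C e) (Cod C w)" "Comp C m e = w"
  shows "mono_arr C m"
proof -
  note kk = is_pullbackD[OF kp[unfolded kernel_pair_def]]
  note ee = is_coequaliserD[OF e]
  have mm: "m \<in> Arr C" "Dom C m = Cod C e"
    using m(1) unfolding hom_def by simp_all
  obtain r1 r2 where r: "is_pullback C m m r1 r2"
    using pullback_exists[where f=m and g=m] mm(1) by metis
  note rr = is_pullbackD[OF r]
  have cod_r: "Cod C r1 = Cod C e" "Cod C r2 = Cod C e"
    using rr(7,8) mm(2) by simp_all
  obtain c a1 a2 where c: "epi_arr C c" "Cod C c = Dom C r1"
    and a: "a1 \<in> Arr C" "a2 \<in> Arr C" "Dom C a1 = Dom C c" "Dom C a2 = Dom C c"
      "Cod C a1 = Dom C e" "Cod C a2 = Dom C e"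
    and ea: "Comp C e a1 = Comp C r1 c" "Comp C e a2 = Comp C r2 c"
    using pair_cover_through_regular_epi[of e r1 r2] e rr(3,4,6) cod_r
    unfolding regular_epi_def by blast
  have cc: "c \<in> Arr C" using epi_arr_arr[OF c(1)] .
  have "Comp C w a1 = Comp C m (Comp C e a1)"
    using m(2)[symmetric] ee(3) mm a(1,5) by (simp add: comp_assoc)
  also have "\<dots> = Comp C m (Comp C r2 c)"
    using ea(1) rr(3,4,6,7,8,9) mm(1) cc c(2) by (simp flip: comp_assoc)
  also have "\<dots> = Comp C w a2"
    using ea(2) m(2)[symmetric] ee(3) mm a(2,6) by (simp add: comp_assoc)
  finally have "Comp C w a1 = Comp C w a2" .
  moreover have "Dom C e = Dom C w"
    using kk(7) ee(5) by simp
  ultimately have "Comp C e a1 = Comp C e a2"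
    using kernel_pair_coequaliser_identifies[OF kp e a(1,2)] a(3-6) by simp
  then have "Comp C r1 c = Comp C r2 c"
    using ea by simp
  then have "r1 = r2"
    using epi_arrD[OF c(1)] rr(3,4,6) c(2) cod_r by simp
  then show ?thesis
    using kernel_pair_diagonal_mono r unfolding kernel_pair_def by blast
qed

lemma regular_epi_mono_factorisation:
  assumes w: "w \<in> Arr C"
  obtains e m where "regular_epi C e" "Dom C e = Dom C w" "hom C m (Cod C e) (Cod C w)"
    "mono_arr C m" "Comp C m e = w"
proof -
  obtain p1 p2 where kp: "kernel_pair C w p1 p2"
    using pullback_exists[where f=w and g=w] w unfolding kernel_pair_def by metis
  then obtain e where e: "is_coequaliser C p1 p2 e"
    using kernel_pair_coequaliser_exists by blast
  note kk = is_pullbackD[OF kp[unfolded kernel_pair_def]]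
  note ee = is_coequaliserD[OF e]
  have de: "Dom C e = Dom C w"
    using kk(7) ee(5) by simp
  obtain m where m: "hom C m (Cod C e) (Cod C w)" "Comp C m e = w"
    using coequaliser_factor[OF e w de[symmetric] kk(9)] .
  show ?thesis
    using that[OF _ de m(1) kernel_pair_coequaliser_factor_mono[OF kp e m] m(2)] e
    unfolding regular_epi_def by blast
qed

lemma pairing_exists:
  assumes a: "a \<in> Arr C" and b: "b \<in> Arr C" and ab: "Dom C a = Dom C b"
  obtains \<pi>1 \<pi>2 w where "jointly_monic C \<pi>1 \<pi>2" "Cod C \<pi>1 = Cod C a" "Cod C \<pi>2 = Cod C b"
    "hom C w (Dom C a) (Dom C \<pi>1)" "Comp C \<pi>1 w = a" "Comp C \<pi>2 w = b"
proof -
  obtain T where T: "terminal C T"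
    using terminal_exists by blast
  then obtain t1 t2 where t: "hom C t1 (Cod C a) T" "hom C t2 (Cod C b) T"
    using a b unfolding terminal_def by (meson cod_obj)
  then have tt: "t1 \<in> Arr C" "t2 \<in> Arr C" "Dom C t1 = Cod C a" "Dom C t2 = Cod C b"
    "Cod C t1 = Cod C t2"
    unfolding hom_def by simp_all
  obtain \<pi>1 \<pi>2 where P: "is_pullback C t1 t2 \<pi>1 \<pi>2"
    using pullback_exists[where f=t1 and g=t2] tt by metis
  note pp = is_pullbackD[OF P]
  have "hom C (Comp C t1 a) (Dom C a) T" "hom C (Comp C t2 b) (Dom C a) T"
    using t a b ab unfolding hom_def by simp_all
  then have ta: "Comp C t1 a = Comp C t2 b"
    by (rule terminal_arrow_unique[OF T])
  obtain w where "hom C w (Dom C a) (Dom C \<pi>1)" "Comp C \<pi>1 w = a" "Comp C \<pi>2 w = b"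
    by (rule pullback_lift[OF P a b ab _ _ ta]) (use tt in simp_all)
  with pullback_jointly_monic[OF P] pp(7,8) tt(3,4) show ?thesis
    using that by simp
qed

lemma image_star_exists:
  assumes f: "f \<in> Arr C" and L: "fst L \<in> Arr C" "snd L \<in> Arr C" "Dom C (fst L) = Dom C (snd L)"
    "Cod C (fst L) = Dom C f" "Cod C (snd L) = Dom C f"
  shows "\<exists>M. image_star C f L M"
proof -
  let ?a = "Comp C f (fst L)" and ?b = "Comp C f (snd L)"
  obtain \<pi>1 \<pi>2 w where \<pi>: "jointly_monic C \<pi>1 \<pi>2" "Cod C \<pi>1 = Cod C f" "Cod C \<pi>2 = Cod C f"
    and w: "hom C w (Dom C ?a) (Dom C \<pi>1)" "Comp C \<pi>1 w = ?a" "Comp C \<pi>2 w = ?b"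
    using pairing_exists[of ?a ?b] f L by auto
  note \<pi>\<pi> = jointly_monic_arr[OF \<pi>(1)]
  have ww: "w \<in> Arr C" "Cod C w = Dom C \<pi>1"
    using w(1) unfolding hom_def by simp_all
  obtain e m where e: "regular_epi C e" "Dom C e = Dom C w" and m: "hom C m (Cod C e) (Cod C w)"
    "mono_arr C m" "Comp C m e = w"
    using regular_epi_mono_factorisation[OF ww(1)] by blast
  have mm: "m \<in> Arr C" "Dom C m = Cod C e" "Cod C m = Dom C \<pi>1"
    using m(1) ww(2) unfolding hom_def by simp_all
  have ea: "e \<in> Arr C"
    using epi_arr_arr[OF regular_epi_epi[OF e(1)]] .
  have "Comp C (Comp C \<pi>1 m) e = ?a" "Comp C (Comp C \<pi>2 m) e = ?b"
    using w(2,3) m(3) \<pi>\<pi> mm ea by (simp_all add: comp_assoc)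
  moreover have "jointly_monic C (Comp C \<pi>1 m) (Comp C \<pi>2 m)"
    using jointly_monic_comp_mono[OF \<pi>(1) m(2) mm(3)] .
  moreover have "Dom C e = Dom C (fst L)"
    using e(2) w(1) f L unfolding hom_def by simp
  ultimately show ?thesis
    unfolding image_star_def using e(1) \<pi> \<pi>\<pi> mm
    by (intro exI[of _ "(Comp C \<pi>1 m, Comp C \<pi>2 m)"] exI[of _ e]) (simp add: hom_def)
qed

end

theorem proposition2p11:
  fixes C :: "('o, 'a) cat" and N :: "'a set" and A :: 'o
    and F G :: "'a \<times> 'a" and f g :: 'a
  assumes "star_regular C N"
    and "property_star C N"
    and "kernel_star_on C N A F"
    and "kernel_star_on C N A G"
    and "star_le C F G"
    and "is_coequaliser C (fst F) (snd F) f"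
    and "is_coequaliser C (fst G) (snd G) g"
  shows "(\<exists>M. image_star C f G M)
    \<and> (\<forall>M. image_star C f G M \<longrightarrow> kernel_star_on C N (Cod C f) M)
    \<and> (\<exists>!q. hom C q (Cod C f) (Cod C g) \<and> Comp C q f = g)
    \<and> (\<forall>q M. hom C q (Cod C f) (Cod C g) \<and> Comp C q f = g \<and> image_star C f G M
         \<longrightarrow> is_coequaliser C (fst M) (snd M) q)
    \<and> (\<forall>M c. image_star C f G M \<and> is_coequaliser C (fst M) (snd M) c
         \<longrightarrow> iso_obj C (Cod C g) (Cod C c))"
proof -
  interpret regular_cat C
    using assms(1) unfolding star_regular_def by unfold_locales blast
  note ff = is_coequaliserD[OF assms(6)] and gg = is_coequaliserD[OF assms(7)]
  note gF = coequaliser_coequalises_smaller_star[OF assms(5,7)]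
  have dom_fg: "Dom C g = Dom C f"
    using gF(1) ff(5) by simp
  have image: "\<exists>M. image_star C f G M"
    using image_star_exists[OF ff(3) gg(1,2,4)] gg(5,6) dom_fg by simp
  have kernel: "\<forall>M. image_star C f G M \<longrightarrow> kernel_star_on C N (Cod C f) M"
    using assms(2-6) unfolding property_star_def by blast
  have factor: "\<exists>!q. hom C q (Cod C f) (Cod C g) \<and> Comp C q f = g"
    using assms(6) gg(3) dom_fg gF(2) unfolding is_coequaliser_def by simp
  note coeq = image_star_coequaliser[OF coequaliser_epi[OF assms(6)] assms(7)]
  obtain q where q: "hom C q (Cod C f) (Cod C g)" "Comp C q f = g"
    using factor by blast
  have "iso_obj C (Cod C g) (Cod C c)"
    if "image_star C f G M" "is_coequaliser C (fst M) (snd M) c" for M c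
    using coequaliser_iso[OF coeq[OF q that(1)] that(2)] q(1) unfolding hom_def by simp
  with image kernel factor coeq show ?thesis
    by blast
qed

end
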